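(* Let $X$ be a nonempty set and $d$ a weak almost partial metric on $X$ such that $(X,d)$ is 0-complete. Let $T:X\to X$, $G\in\{M_1,M_2\}$, and suppose $d(Tx,Ty)\le\varphi(G(x,y))$ for all $x,y\in X$, for some nearly right admissible asymptotic normal function $\varphi:[0,\infty)\to[0,\infty)$. Then there is $z\in X$ with $d(z,z)=0$ such that $\mathrm{Fix}(T;d)=\mathrm{Fix}(T)=\{z\}$, and $d(T^nx,z)\to0$ as $n\to\infty$ for each $x\in X$.
   Context: A symmetric on $X$ is a map $d:X\times X\to[0,\infty)$ with $d(x,y)=d(y,x)$. It is a weak almost partial metric if it is triangular ($d(x,z)\le d(x,y)+d(y,z)$ for all $x,y,z$) and sufficient ($d(x,y)=0$ implies $x=y$). A sequence $(x_n)$ $0d$-converges to $x$ if $d(x_n,x)\to0$; it is $0d$-Cauchy if for every $\varepsilon>0$ there is $j$ with $d(x_m,x_n)<\varepsilon$ whenever $j\le m<n$; $(X,d)$ is 0-complete if every $0d$-Cauchy sequence $0d$-converges to some point. $\mathrm{Fix}(T;d)=\{z: d(z,Tz)=0\}$, $\mathrm{Fix}(T)=\{z: Tz=z\}$. Notation: $M_1(x,y)=d(x,y)$, $H(x,y)=\max\{d(x,Tx),d(y,Ty)\}$, $M_2=\max\{M_1,H\}$. $\varphi$ is normal if $\varphi(0)=0$ and $\varphi(t)<t$ for $t>0$; asymptotic normal if normal and every sequence $(r_n)$ in $[0,\infty)$ with $r_{n+1}\le\varphi(r_n)$ for all $n$ tends to $0$; nearly right admissible if normal and there is a countable $Q\subseteq(0,\infty)$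 with $\max\{\limsup_{t\to s+}\varphi(t),\varphi(s)\}<s$ for all $s\in(0,\infty)\setminus Q$. *)

theory Defs
  imports "HOL-Analysis.Analysis" "HOL-Library.Liminf_Limsup"
begin

text \<open>All notions are relativised to a carrier set S (the set X of the paper).\<close>

definition symmetric_on :: "'a set \<Rightarrow> ('a \<Rightarrow> 'a \<Rightarrow> real) \<Rightarrow> bool" where
  "symmetric_on S d \<longleftrightarrow> (\<forall>x\<in>S. \<forall>y\<in>S. d x y \<ge> 0 \<and> d x y = d y x)"

definition weak_almost_partial_metric_on :: "'a set \<Rightarrow> ('a \<Rightarrow> 'a \<Rightarrow> real) \<Rightarrow> bool" where
  "weak_almost_partial_metric_on S d \<longleftrightarrow> symmetric_on S d
     \<and> (\<forall>x\<in>S. \<forall>y\<in>S. \<forall>z\<in>S. d x z \<le> d x y + d y z)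
     \<and> (\<forall>x\<in>S. \<forall>y\<in>S. d x y = 0 \<longrightarrow> x = y)"

definition zero_converges :: "('a \<Rightarrow> 'a \<Rightarrow> real) \<Rightarrow> (nat \<Rightarrow> 'a) \<Rightarrow> 'a \<Rightarrow> bool" where
  "zero_converges d u x \<longleftrightarrow> (\<lambda>n. d (u n) x) \<longlonglongrightarrow> 0"

definition zero_cauchy :: "('a \<Rightarrow> 'a \<Rightarrow> real) \<Rightarrow> (nat \<Rightarrow> 'a) \<Rightarrow> bool" where
  "zero_cauchy d u \<longleftrightarrow> (\<forall>e>0. \<exists>j. \<forall>m n. j \<le> m \<and> m < n \<longrightarrow> d (u m) (u n) < e)"

definition zero_complete_on :: "'a set \<Rightarrow> ('a \<Rightarrow> 'a \<Rightarrow> real) \<Rightarrow> bool" where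
  "zero_complete_on S d \<longleftrightarrow>
     (\<forall>u. (\<forall>n. u n \<in> S) \<and> zero_cauchy d u \<longrightarrow> (\<exists>x\<in>S. zero_converges d u x))"

definition Fix_d :: "'a set \<Rightarrow> ('a \<Rightarrow> 'a \<Rightarrow> real) \<Rightarrow> ('a \<Rightarrow> 'a) \<Rightarrow> 'a set" where
  "Fix_d S d T = {z\<in>S. d z (T z) = 0}"

definition Fix :: "'a set \<Rightarrow> ('a \<Rightarrow> 'a) \<Rightarrow> 'a set" where
  "Fix S T = {z\<in>S. T z = z}"

definition M1 :: "('a \<Rightarrow> 'a \<Rightarrow> real) \<Rightarrow> ('a \<Rightarrow> 'a) \<Rightarrow> 'a \<Rightarrow> 'a \<Rightarrow> real" where
  "M1 d T x y = d x y"

definition H :: "('a \<Rightarrow> 'a \<Rightarrow> real) \<Rightarrow> ('a \<Rightarrow> 'a) \<Rightarrow> 'a \<Rightarrow> 'a \<Rightarrow> real" where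
  "H d T x y = max (d x (T x)) (d y (T y))"

definition M2 :: "('a \<Rightarrow> 'a \<Rightarrow> real) \<Rightarrow> ('a \<Rightarrow> 'a) \<Rightarrow> 'a \<Rightarrow> 'a \<Rightarrow> real" where
  "M2 d T x y = max (M1 d T x y) (H d T x y)"

text \<open>phi is regarded as a function on [0,\<infinity>); only its values there matter.\<close>

definition normal_fun :: "(real \<Rightarrow> real) \<Rightarrow> bool" where
  "normal_fun \<phi> \<longleftrightarrow> (\<forall>t\<ge>0. \<phi> t \<ge> 0) \<and> \<phi> 0 = 0 \<and> (\<forall>t>0. \<phi> t < t)"

definition asymptotic_normal :: "(real \<Rightarrow> real) \<Rightarrow> bool" where
  "asymptotic_normal \<phi> \<longleftrightarrow> normal_fun \<phi> \<and>
     (\<forall>r::nat \<Rightarrow> real. (\<forall>n. r n \<ge> 0) \<and> (\<forall>n. r (Suc n) \<le> \<phi> (r n)) \<longrightarrow> r \<longlonglongrightarrow> 0)"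

definition nearly_right_admissible :: "(real \<Rightarrow> real) \<Rightarrow> bool" where
  "nearly_right_admissible \<phi> \<longleftrightarrow> normal_fun \<phi> \<and>
     (\<exists>Q. countable Q \<and> Q \<subseteq> {0<..} \<and>
        (\<forall>s. s > 0 \<and> s \<notin> Q \<longrightarrow>
           max (Limsup (at_right s) (\<lambda>t. ereal (\<phi> t))) (ereal (\<phi> s)) < ereal s))"

end

theory Submission
  imports Defs
begin

text \<open>The displacements \<open>r\<^sub>n = d (T\<^sup>n x) (T\<^sup>n\<^sup>+\<^sup>1 x)\<close> satisfy \<open>r\<^sub>n\<^sub>+\<^sub>1 \<le> \<phi> r\<^sub>n\<close>, so they tend
  to 0 because \<open>\<phi>\<close> is asymptotic normal. Near right admissibility yields, below any \<open>\<epsilon>\<close>, a level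
  \<open>s\<close> and a margin \<open>\<eta>\<close> with \<open>\<phi> < s\<close> on \<open>[0, s + \<eta>)\<close>; once \<open>r\<^sub>n < \<eta>\<close>, the contraction keeps the
  whole tail of the orbit within \<open>s + \<eta>\<close> of \<open>T\<^sup>m x\<close>, so orbits are 0-Cauchy. Their 0-limits are
  fixed points, and \<open>\<phi> t < t\<close> makes the fixed point unique with \<open>d z z = 0\<close>.\<close>

lemma normal_fun_nonneg: "normal_fun \<phi> \<Longrightarrow> 0 \<le> t \<Longrightarrow> 0 \<le> \<phi> t"
  unfolding normal_fun_def by blast

lemma normal_fun_le:
  assumes "normal_fun \<phi>" "0 \<le> t"
  shows "\<phi> t \<le> t"
  using assms unfolding normal_fun_def by (metis less_eq_real_def)

lemma normal_fun_le_self_imp_eq_0: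
  assumes "normal_fun \<phi>" "0 \<le> t" "t \<le> \<phi> t"
  shows "t = 0"
  using assms unfolding normal_fun_def by (metis less_eq_real_def not_less)

lemma asymptotic_normal_tendsto_0:
  assumes "asymptotic_normal \<phi>" "\<And>n. 0 \<le> r n" "\<And>n. r (Suc n) \<le> \<phi> (r n)"
  shows "r \<longlonglongrightarrow> 0"
  using assms unfolding asymptotic_normal_def by blast

text \<open>The countable exceptional set is avoided inside every interval \<open>(0, \<epsilon>/2)\<close>; at such an
  \<open>s\<close> the limsup condition keeps \<open>\<phi>\<close> below \<open>s\<close> on a right neighbourhood, and \<open>\<phi> t \<le> t\<close>
  does so to the left.\<close>

lemma nearly_right_admissible_gap:
  assumes "nearly_right_admissible \<phi>" "0 < \<epsilon>"
  obtains s \<eta> where "0 < s" "0 < \<eta>" "s + \<eta> \<le> \<epsilon>"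
    and "\<And>g. 0 \<le> g \<Longrightarrow> g < s + \<eta> \<Longrightarrow> \<phi> g < s"
proof -
  have normal: "normal_fun \<phi>"
    using assms(1) unfolding nearly_right_admissible_def by blast
  obtain Q where "countable Q"
    and Q: "\<And>s. 0 < s \<Longrightarrow> s \<notin> Q \<Longrightarrow>
      max (Limsup (at_right s) (\<lambda>t. ereal (\<phi> t))) (ereal (\<phi> s)) < ereal s"
    using assms(1) unfolding nearly_right_admissible_def by (elim conjE exE) blast
  have "uncountable ({0<..<\<epsilon>/2} - Q)"
    using uncountable_open_interval[of 0 "\<epsilon>/2"] \<open>countable Q\<close> assms(2)
      uncountable_minus_countable by simp
  then obtain s where s: "0 < s" "s < \<epsilon>/2" "s \<notin> Q"
    by (metis DiffE countable_empty ex_in_conv greaterThanLessThan_iff)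
  then have "Limsup (at_right s) (\<lambda>t. ereal (\<phi> t)) < ereal s" and "\<phi> s < s"
    using Q[of s] by auto
  then have "eventually (\<lambda>t. \<phi> t < s) (at_right s)"
    by (auto dest: Limsup_lessD)
  then obtain b where "s < b" and b: "\<And>t. s < t \<Longrightarrow> t < b \<Longrightarrow> \<phi> t < s"
    unfolding eventually_at_right_field by blast
  define \<eta> where "\<eta> = min (b - s) s"
  show thesis
  proof
    show "0 < s" "0 < \<eta>" "s + \<eta> \<le> \<epsilon>"
      using \<open>s < b\<close> s by (auto simp: \<eta>_def)
    fix g assume "0 \<le> g" "g < s + \<eta>"
    then show "\<phi> g < s"
      using normal_fun_le[OF normal, of g] b[of g] \<open>\<phi> s < s\<close>
      by (cases g s rule: linorder_cases) (auto simp: \<eta>_def)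
  qed
qed

locale phi_contraction =
  fixes S :: "'a set" and d :: "'a \<Rightarrow> 'a \<Rightarrow> real" and T :: "'a \<Rightarrow> 'a"
    and G :: "'a \<Rightarrow> 'a \<Rightarrow> real" and \<phi> :: "real \<Rightarrow> real"
  assumes metric: "weak_almost_partial_metric_on S d"
    and maps_to: "T ` S \<subseteq> S"
    and G_choice: "G = M1 d T \<or> G = M2 d T"
    and normal: "normal_fun \<phi>"
    and contraction: "\<And>x y. x \<in> S \<Longrightarrow> y \<in> S \<Longrightarrow> d (T x) (T y) \<le> \<phi> (G x y)"
begin

lemma
  shows nonneg: "x \<in> S \<Longrightarrow> y \<in> S \<Longrightarrow> 0 \<le> d x y"
    and commute: "x \<in> S \<Longrightarrow> y \<in> S \<Longrightarrow> d x y = d y x"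
    and triangle: "x \<in> S \<Longrightarrow> y \<in> S \<Longrightarrow> z \<in> S \<Longrightarrow> d x z \<le> d x y + d y z"
    and zero_imp_eq: "x \<in> S \<Longrightarrow> y \<in> S \<Longrightarrow> d x y = 0 \<Longrightarrow> x = y"
  using metric unfolding weak_almost_partial_metric_on_def symmetric_on_def by simp_all

lemma T_in: "x \<in> S \<Longrightarrow> T x \<in> S"
  using maps_to by blast

lemma iterate_in: "x \<in> S \<Longrightarrow> (T ^^ n) x \<in> S"
  by (induction n) (auto simp: T_in)

lemma G_cases: "G x y = d x y \<or> G x y = max (d x y) (max (d x (T x)) (d y (T y)))"
  using G_choice unfolding M1_def M2_def H_def by auto

lemma contraction_step:
  assumes "a \<in> S"
  shows "d (T a) (T (T a)) \<le> \<phi> (d a (T a))"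
proof -
  have a: "T a \<in> S" "T (T a) \<in> S"
    using assms by (auto intro: T_in)
  have c: "d (T a) (T (T a)) \<le> \<phi> (G a (T a))"
    using contraction assms a(1) .
  consider "G a (T a) = d a (T a)" | "G a (T a) = d (T a) (T (T a))"
    using G_cases[of a "T a"] by linarith
  then show ?thesis
  proof cases
    case 1
    then show ?thesis using c by simp
  next
    case 2
    then have "d (T a) (T (T a)) = 0"
      using c normal_fun_le_self_imp_eq_0[OF normal nonneg[OF a]] by simp
    then show ?thesis
      using normal_fun_nonneg[OF normal nonneg[OF assms a(1)]] by linarith
  qed
qed

lemma fixpoint_self_distance:
  assumes "z \<in> S" "T z = z"
  shows "d z z = 0"
proof -
  have "G z z = d z z"
    using G_cases[of z z] assms(2) by auto
  then have "d z z \<le> \<phi> (d z z)"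
    using contraction[OF assms(1) assms(1)] assms(2) by simp
  then show ?thesis
    using normal_fun_le_self_imp_eq_0[OF normal] nonneg[OF assms(1) assms(1)] by blast
qed

lemma fixpoint_unique:
  assumes "w \<in> S" "z \<in> S" "T w = w" "T z = z"
  shows "w = z"
proof -
  have "G w z = d w z"
    using G_cases[of w z] fixpoint_self_distance assms nonneg[OF assms(1,2)] by auto
  then have "d w z \<le> \<phi> (d w z)"
    using contraction[OF assms(1,2)] assms(3,4) by simp
  then have "d w z = 0"
    using normal_fun_le_self_imp_eq_0[OF normal] nonneg[OF assms(1,2)] by blast
  then show ?thesis
    using zero_imp_eq assms(1,2) by blast
qed

lemma fixpoint_iff_zero_displacement:
  assumes "z \<in> S"
  shows "d z (T z) = 0 \<longleftrightarrow> T z = z"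
  using assms fixpoint_self_distance zero_imp_eq[OF assms T_in[OF assms]] by auto

lemma orbit_displacement_tendsto_0:
  assumes "asymptotic_normal \<phi>" "x \<in> S"
  shows "(\<lambda>n. d ((T ^^ n) x) ((T ^^ Suc n) x)) \<longlonglongrightarrow> 0"
  by (rule asymptotic_normal_tendsto_0[OF assms(1)])
    (simp_all add: nonneg T_in contraction_step iterate_in[OF assms(2)])

text \<open>Induction on \<open>n\<close>: the triangle inequality through \<open>T\<^sup>m\<^sup>+\<^sup>1 x\<close> and the
  contraction applied to \<open>(T\<^sup>m x, T\<^sup>n x)\<close> keep the orbit inside a ball of radius \<open>s + \<eta>\<close>.\<close>

lemma orbit_dist_lt:
  assumes "x \<in> S" "0 < s"
    and gap: "\<And>g. 0 \<le> g \<Longrightarrow> g < s + \<eta> \<Longrightarrow> \<phi> g < s"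
    and small: "\<And>n. N \<le> n \<Longrightarrow> d ((T ^^ n) x) ((T ^^ Suc n) x) < \<eta>"
    and "N \<le> m" "Suc m \<le> n"
  shows "d ((T ^^ m) x) ((T ^^ n) x) < s + \<eta>"
  using \<open>Suc m \<le> n\<close>
proof (induction n rule: dec_induct)
  case base
  then show ?case using small[OF \<open>N \<le> m\<close>] \<open>0 < s\<close> by simp
next
  case (step n)
  let ?u = "\<lambda>n. (T ^^ n) x"
  have u: "?u m \<in> S" "?u n \<in> S" "?u (Suc m) \<in> S" "?u (Suc n) \<in> S"
    using iterate_in \<open>x \<in> S\<close> by blast+
  have "d (?u m) (T (?u m)) < \<eta>" "d (?u n) (T (?u n)) < \<eta>"
    using small[of m] small[of n] \<open>N \<le> m\<close> step(1) by simp_all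
  then have "G (?u m) (?u n) < s + \<eta>"
    using G_cases[of "?u m" "?u n"] step.IH \<open>0 < s\<close> by auto
  moreover have "0 \<le> G (?u m) (?u n)"
    using G_cases[of "?u m" "?u n"] nonneg[OF u(1,2)] by auto
  ultimately have "\<phi> (G (?u m) (?u n)) < s"
    by (rule gap[rotated])
  then have "d (?u (Suc m)) (?u (Suc n)) < s"
    using contraction[OF u(1,2)] by simp
  then show ?case
    using triangle[OF u(1,3,4)] small[OF \<open>N \<le> m\<close>] by simp
qed

lemma orbit_zero_cauchy:
  assumes "nearly_right_admissible \<phi>" "asymptotic_normal \<phi>" "x \<in> S"
  shows "zero_cauchy d (\<lambda>n. (T ^^ n) x)"
  unfolding zero_cauchy_def
proof (intro allI impI)
  fix \<epsilon> :: real assume "0 < \<epsilon>"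
  obtain s \<eta> where "0 < s" "0 < \<eta>" "s + \<eta> \<le> \<epsilon>"
    and gap: "\<And>g. 0 \<le> g \<Longrightarrow> g < s + \<eta> \<Longrightarrow> \<phi> g < s"
    using nearly_right_admissible_gap[OF assms(1) \<open>0 < \<epsilon>\<close>] by blast
  obtain N where small: "\<And>n. N \<le> n \<Longrightarrow> d ((T ^^ n) x) ((T ^^ Suc n) x) < \<eta>"
    using order_tendstoD(2)[OF orbit_displacement_tendsto_0[OF assms(2,3)] \<open>0 < \<eta>\<close>]
    unfolding eventually_sequentially by blast
  have "d ((T ^^ m) x) ((T ^^ n) x) < \<epsilon>" if "N \<le> m" "m < n" for m n
  proof -
    have "d ((T ^^ m) x) ((T ^^ n) x) < s + \<eta>"
      using assms(3) \<open>0 < s\<close> gap small that(1) Suc_leI[OF that(2)] by (rule orbit_dist_lt)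
    then show ?thesis
      using \<open>s + \<eta> \<le> \<epsilon>\<close> by simp
  qed
  then show "\<exists>j. \<forall>m n. j \<le> m \<and> m < n \<longrightarrow> d ((T ^^ m) x) ((T ^^ n) x) < \<epsilon>"
    by blast
qed

text \<open>If \<open>a = d z (T z) > 0\<close>, then for large \<open>n\<close> all of \<open>d (T\<^sup>n x) z\<close>, \<open>d (T\<^sup>n\<^sup>+\<^sup>1 x) z\<close>
  and \<open>d (T\<^sup>n x) (T\<^sup>n\<^sup>+\<^sup>1 x)\<close> are below \<open>e\<close>, so \<open>G (T\<^sup>n x) z\<close> is either tiny or equal to \<open>a\<close>;
  either way \<open>a \<le> d z (T\<^sup>n\<^sup>+\<^sup>1 x) + \<phi> (G (T\<^sup>n x) z)\<close> is violated.\<close>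

lemma orbit_limit_is_fixpoint:
  assumes "asymptotic_normal \<phi>" "x \<in> S" "z \<in> S" "zero_converges d (\<lambda>n. (T ^^ n) x) z"
  shows "T z = z"
proof -
  let ?u = "\<lambda>n. (T ^^ n) x"
  define a where "a = d z (T z)"
  have "0 \<le> a"
    using nonneg assms(3) T_in a_def by blast
  have "\<not> 0 < a"
  proof
    assume "0 < a"
    then have "\<phi> a < a"
      using normal unfolding normal_fun_def by blast
    have "0 \<le> \<phi> a"
      using normal_fun_nonneg[OF normal \<open>0 \<le> a\<close>] .
    define e where "e = (a - \<phi> a) / 2"
    have "0 < e" "e \<le> a"
      using \<open>\<phi> a < a\<close> \<open>0 \<le> \<phi> a\<close> unfolding e_def by auto
    have L: "(\<lambda>n. d (?u n) z) \<longlonglongrightarrow> 0"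
      using assms(4) unfolding zero_converges_def .
    have "eventually (\<lambda>n. d (?u n) z < e \<and> d (?u (Suc n)) z < e
        \<and> d (?u n) (?u (Suc n)) < e) sequentially"
      using order_tendstoD(2)[OF L \<open>0 < e\<close>] order_tendstoD(2)[OF LIMSEQ_Suc[OF L] \<open>0 < e\<close>]
        order_tendstoD(2)[OF orbit_displacement_tendsto_0[OF assms(1,2)] \<open>0 < e\<close>]
      by eventually_elim blast
    then obtain n where n: "d (?u n) z < e" "d (?u (Suc n)) z < e" "d (?u n) (?u (Suc n)) < e"
      using eventually_sequentially by auto
    have u: "?u n \<in> S" "?u (Suc n) \<in> S"
      using iterate_in assms(2) by blast+
    have "a \<le> d z (?u (Suc n)) + d (T (?u n)) (T z)"
      using triangle[OF assms(3) u(2) T_in[OF assms(3)]] by (simp add: a_def)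
    also have "\<dots> \<le> d (?u (Suc n)) z + \<phi> (G (?u n) z)"
      using contraction[OF u(1) assms(3)] commute[OF assms(3) u(2)] by simp
    finally have A: "a \<le> d (?u (Suc n)) z + \<phi> (G (?u n) z)" .
    have "G (?u n) z = d (?u n) z \<or> G (?u n) z = a"
      using G_cases[of "?u n" z] n \<open>e \<le> a\<close> by (auto simp: a_def)
    then have "\<phi> (G (?u n) z) \<le> d (?u n) z \<or> \<phi> (G (?u n) z) = \<phi> a"
      using normal_fun_le[OF normal nonneg[OF u(1) assms(3)]] by auto
    then show False
      using A n(1,2) \<open>\<phi> a < a\<close> \<open>0 \<le> \<phi> a\<close> unfolding e_def by (elim disjE; argo)
  qed
  then have "d z (T z) = 0"
    using \<open>0 \<le> a\<close> a_def by simp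
  then show ?thesis
    using fixpoint_iff_zero_displacement assms(3) by blast
qed

end

theorem theorem5:
  fixes S :: "'a set" and d :: "'a \<Rightarrow> 'a \<Rightarrow> real" and T :: "'a \<Rightarrow> 'a"
    and G :: "'a \<Rightarrow> 'a \<Rightarrow> real" and \<phi> :: "real \<Rightarrow> real"
  assumes "S \<noteq> {}"
    and "weak_almost_partial_metric_on S d"
    and "zero_complete_on S d"
    and "T ` S \<subseteq> S"
    and "G = M1 d T \<or> G = M2 d T"
    and "nearly_right_admissible \<phi>" and "asymptotic_normal \<phi>"
    and "\<forall>x\<in>S. \<forall>y\<in>S. d (T x) (T y) \<le> \<phi> (G x y)"
  shows "\<exists>z\<in>S. d z z = 0 \<and> Fix_d S d T = {z} \<and> Fix S T = {z} \<and>
           (\<forall>x\<in>S. (\<lambda>n. d ((T ^^ n) x) z) \<longlonglongrightarrow> 0)"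
proof -
  interpret phi_contraction S d T G \<phi>
    using assms(2,4,5,7,8) by unfold_locales (auto simp: asymptotic_normal_def)
  have limit: "\<exists>z\<in>S. T z = z \<and> zero_converges d (\<lambda>n. (T ^^ n) x) z" if x: "x \<in> S" for x
  proof -
    obtain z where "z \<in> S" "zero_converges d (\<lambda>n. (T ^^ n) x) z"
      using assms(3)[unfolded zero_complete_on_def, rule_format, of "\<lambda>n. (T ^^ n) x"]
        iterate_in[OF x] orbit_zero_cauchy[OF assms(6,7) x] by blast
    then show ?thesis
      using orbit_limit_is_fixpoint[OF assms(7) x] by blast
  qed
  obtain z where z: "z \<in> S" "T z = z"
    using limit assms(1) by blast
  have "Fix S T = {z}"
    using z fixpoint_unique unfolding Fix_def by blast
  moreover have "Fix_d S d T = {z}"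
    using \<open>Fix S T = {z}\<close> fixpoint_iff_zero_displacement unfolding Fix_def Fix_d_def by blast
  moreover have "(\<lambda>n. d ((T ^^ n) x) z) \<longlonglongrightarrow> 0" if "x \<in> S" for x
    using limit[OF that] fixpoint_unique z unfolding zero_converges_def by blast
  ultimately show ?thesis
    using z fixpoint_self_distance by blast
qed

end
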